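(* Let $\mathbf{K}$ be a $\mu$-AEC and let $\mathbf{K}^+$ be its substructure functorial expansion. If $M^+, N^+ \in \mathbf{K}^+$ are such that $M^+$ is a $\tau(\mathbf{K}^+)$-substructure of $N^+$, then $M^+ \le_{\mathbf{K}^+} N^+$.
   Context: Let $\mu$ be regular. A $\mu$-ary abstract class is a pair $\mathbf{K} = (K, \le_{\mathbf{K}})$ where $K$ is a class of structures in a fixed vocabulary $\tau(\mathbf{K})$ whose symbols have arity $<\mu$, and $\le_{\mathbf{K}}$ is a partial order on $K$ respecting isomorphisms and extending the substructure relation; $UM$ denotes the universe of $M$. It is a $\mu$-AEC if: (coherence) $M_0 \subseteq M_1 \le_{\mathbf{K}} M_2$ and $M_0 \le_{\mathbf{K}} M_2$ imply $M_0 \le_{\mathbf{K}} M_1$; (chain axioms) for every $\mu$-directed system $\langle M_i : i\in I\rangle$ in $\mathbf{K}$ (i.e. $I$ is a poset in which every subset of size $<\mu$ has an upper bound and $i\le j$ implies $M_i \le_{\mathbf{K}} M_j$), $M := \bigcup_i M_i \in K$, $M_i \le_{\mathbf{K}} M$ for all $i$, and if $M_i \le_{\mathbf{K}} N$ for all $i$ then $M \le_{\mathbf{K}} N$; (LST axiom) there is a cardinal $\lambda = \lambda^{<\mu} \ge |\tau(\mathbf{K})| + \mu$ such that for every $M \in K$ and $A \subseteq UM$ there is $M_0 \le_{\mathbf{K}} M$ with $A \subseteq UM_0$ and $|UM_0| \le |A|^{<\mu} + \lambda$; $\mathrm{LS}(\mathbf{K})$ is the least such $\lambda$. The substructure functorial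 expansion $\mathbf{K}^+$ of $\mathbf{K}$: $\tau(\mathbf{K}^+) = \tau(\mathbf{K}) \cup \{P\}$ with $P$ a new $\mathrm{LS}(\mathbf{K})$-ary predicate; $M^+ \in \mathbf{K}^+$ iff $M^+ \upharpoonright \tau(\mathbf{K}) \in \mathbf{K}$ and for every $\bar a \in {}^{\mathrm{LS}(\mathbf{K})}(UM^+)$, $P^{M^+}(\bar a)$ holds iff $\mathrm{ran}(\bar a)$, viewed as a $\tau(\mathbf{K})$-structure (substructure of $M^+\upharpoonright\tau(\mathbf{K})$), satisfies $\mathrm{ran}(\bar a) \le_{\mathbf{K}} M^+ \upharpoonright \tau(\mathbf{K})$; and $M^+ \le_{\mathbf{K}^+} N^+$ iff $M^+ \upharpoonright \tau(\mathbf{K}) \le_{\mathbf{K}} N^+ \upharpoonright \tau(\mathbf{K})$. *)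

theory Defs
  imports Main "HOL-Library.FuncSet"
begin

unbundle cardinal_syntax

text \<open>A vocabulary: relation symbols, function symbols (constants = 0-ary function
symbols) and an arity for each symbol, given as a set of argument positions
(of type 'i).\<close>

record ('s, 'i) vocab =
  RS :: "'s set"
  FS :: "'s set"
  ar :: "'s \<Rightarrow> 'i set"

record ('a, 's, 'i) struc =
  univ :: "'a set"
  rel  :: "'s \<Rightarrow> ('i \<Rightarrow> 'a) set"
  fn   :: "'s \<Rightarrow> ('i \<Rightarrow> 'a) \<Rightarrow> 'a"

definition tuples :: "('s, 'i) vocab \<Rightarrow> 's \<Rightarrow> 'a set \<Rightarrow> ('i \<Rightarrow> 'a) set" where
  "tuples V s U = ar V s \<rightarrow>\<^sub>E U"

text \<open>Well-formed tau-structure (universes nonempty, as usual in model theory;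
values outside the vocabulary are normalised so that structures are determined
by their tau-content).\<close>
definition wf_struc :: "('s, 'i) vocab \<Rightarrow> ('a, 's, 'i) struc \<Rightarrow> bool" where
  "wf_struc V M \<longleftrightarrow>
     univ M \<noteq> {} \<and>
     (\<forall>s. rel M s \<subseteq> tuples V s (univ M)) \<and>
     (\<forall>s. s \<notin> RS V \<longrightarrow> rel M s = {}) \<and>
     (\<forall>s \<in> FS V. \<forall>x \<in> tuples V s (univ M). fn M s x \<in> univ M) \<and>
     (\<forall>s x. \<not> (s \<in> FS V \<and> x \<in> tuples V s (univ M)) \<longrightarrow> fn M s x = undefined)"

definition substr :: "('s, 'i) vocab \<Rightarrow> ('a, 's, 'i) struc \<Rightarrow> ('a, 's, 'i) struc \<Rightarrow> bool" where
  "substr V M N \<longleftrightarrow> wf_struc V M \<and> wf_struc V N \<and> univ M \<subseteq> univ N \<and>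
     (\<forall>s. rel M s = rel N s \<inter> tuples V s (univ M)) \<and>
     (\<forall>s \<in> FS V. \<forall>x \<in> tuples V s (univ M). fn M s x = fn N s x)"

text \<open>The subset A of the universe of M viewed as a tau-structure (it is a
substructure of M iff A is nonempty and closed under the functions).\<close>
definition restr :: "('s, 'i) vocab \<Rightarrow> ('a, 's, 'i) struc \<Rightarrow> 'a set \<Rightarrow> ('a, 's, 'i) struc" where
  "restr V M A = \<lparr> univ = A,
     rel = (\<lambda>s. rel M s \<inter> tuples V s A),
     fn = (\<lambda>s x. if s \<in> FS V \<and> x \<in> tuples V s A then fn M s x else undefined) \<rparr>"

definition iso :: "('s, 'i) vocab \<Rightarrow> ('a \<Rightarrow> 'a) \<Rightarrow> ('a, 's, 'i) struc \<Rightarrow> ('a, 's, 'i) struc \<Rightarrow> bool" where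
  "iso V f M N \<longleftrightarrow> wf_struc V M \<and> wf_struc V N \<and> bij_betw f (univ M) (univ N) \<and>
     (\<forall>s. \<forall>x \<in> tuples V s (univ M).
        (s \<in> RS V \<longrightarrow> (x \<in> rel M s \<longleftrightarrow> restrict (f \<circ> x) (ar V s) \<in> rel N s)) \<and>
        (s \<in> FS V \<longrightarrow> f (fn M s x) = fn N s (restrict (f \<circ> x) (ar V s))))"

definition regular_infinite :: "'m rel \<Rightarrow> bool" where
  "regular_infinite mu \<longleftrightarrow> Card_order mu \<and> infinite (Field mu) \<and> regularCard mu"

definition mu_ary_abstract_class ::
  "('s, 'i) vocab \<Rightarrow> 'm rel \<Rightarrow> ('a, 's, 'i) struc set \<Rightarrow>
   (('a, 's, 'i) struc \<Rightarrow> ('a, 's, 'i) struc \<Rightarrow> bool) \<Rightarrow> bool" where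
  "mu_ary_abstract_class V mu K le \<longleftrightarrow>
     RS V \<inter> FS V = {} \<and>
     (\<forall>s \<in> RS V \<union> FS V. |ar V s| <o mu) \<and>
     (\<forall>M \<in> K. wf_struc V M) \<and>
     (\<forall>M N. le M N \<longrightarrow> M \<in> K \<and> N \<in> K) \<and>
     (\<forall>M \<in> K. le M M) \<and>
     (\<forall>M N P. le M N \<longrightarrow> le N P \<longrightarrow> le M P) \<and>
     (\<forall>M N. le M N \<longrightarrow> le N M \<longrightarrow> M = N) \<and>
     (\<forall>M N. le M N \<longrightarrow> substr V M N) \<and>
     (\<forall>f M N. M \<in> K \<longrightarrow> iso V f M N \<longrightarrow> N \<in> K) \<and>
     (\<forall>f M1 M2 N1 N2. le M1 M2 \<longrightarrow> iso V f M1 N1 \<longrightarrow> iso V f M2 N2 \<longrightarrow> le N1 N2)"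

definition coherence ::
  "('s, 'i) vocab \<Rightarrow> ('a, 's, 'i) struc set \<Rightarrow>
   (('a, 's, 'i) struc \<Rightarrow> ('a, 's, 'i) struc \<Rightarrow> bool) \<Rightarrow> bool" where
  "coherence V K le \<longleftrightarrow>
     (\<forall>M0 M1 M2. M0 \<in> K \<longrightarrow> M1 \<in> K \<longrightarrow> substr V M0 M1 \<longrightarrow> le M1 M2 \<longrightarrow> le M0 M2 \<longrightarrow> le M0 M1)"

definition mu_directed :: "'m rel \<Rightarrow> 'x set \<Rightarrow> ('x \<Rightarrow> 'x \<Rightarrow> bool) \<Rightarrow> bool" where
  "mu_directed mu I ord \<longleftrightarrow>
     (\<forall>i \<in> I. ord i i) \<and>
     (\<forall>i \<in> I. \<forall>j \<in> I. \<forall>k \<in> I. ord i j \<longrightarrow> ord j k \<longrightarrow> ord i k) \<and>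
     (\<forall>i \<in> I. \<forall>j \<in> I. ord i j \<longrightarrow> ord j i \<longrightarrow> i = j) \<and>
     (\<forall>X \<subseteq> I. |X| <o mu \<longrightarrow> (\<exists>j \<in> I. \<forall>i \<in> X. ord i j))"

definition directed_system ::
  "'m rel \<Rightarrow> ('a, 's, 'i) struc set \<Rightarrow> (('a, 's, 'i) struc \<Rightarrow> ('a, 's, 'i) struc \<Rightarrow> bool) \<Rightarrow>
   'x set \<Rightarrow> ('x \<Rightarrow> 'x \<Rightarrow> bool) \<Rightarrow> ('x \<Rightarrow> ('a, 's, 'i) struc) \<Rightarrow> bool" where
  "directed_system mu K le I ord Ms \<longleftrightarrow>
     mu_directed mu I ord \<and> (\<forall>i \<in> I. Ms i \<in> K) \<and>
     (\<forall>i \<in> I. \<forall>j \<in> I. ord i j \<longrightarrow> le (Ms i) (Ms j))"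

text \<open>M is the union of the system: its universe is the union of the universes
and every member is a substructure of it (this determines M).\<close>
definition is_union ::
  "('s, 'i) vocab \<Rightarrow> 'x set \<Rightarrow> ('x \<Rightarrow> ('a, 's, 'i) struc) \<Rightarrow> ('a, 's, 'i) struc \<Rightarrow> bool" where
  "is_union V I Ms M \<longleftrightarrow> wf_struc V M \<and> univ M = (\<Union>i \<in> I. univ (Ms i)) \<and>
     (\<forall>i \<in> I. substr V (Ms i) M)"

text \<open>Chain axioms.  Index posets are taken inside the type of structures; this
is no loss since any directed system can be reindexed by its set of members
ordered by le.\<close>
definition chain_axioms ::
  "('s, 'i) vocab \<Rightarrow> 'm rel \<Rightarrow> ('a, 's, 'i) struc set \<Rightarrow>
   (('a, 's, 'i) struc \<Rightarrow> ('a, 's, 'i) struc \<Rightarrow> bool) \<Rightarrow> bool" where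
  "chain_axioms V mu K le \<longleftrightarrow>
     (\<forall>(I :: ('a, 's, 'i) struc set) ord Ms. directed_system mu K le I ord Ms \<longrightarrow>
        (\<forall>M. is_union V I Ms M \<longrightarrow>
           M \<in> K \<and> (\<forall>i \<in> I. le (Ms i) M) \<and>
           (\<forall>N. (\<forall>i \<in> I. le (Ms i) N) \<longrightarrow> le M N)))"

text \<open>The set of sequences of length < mu from A (sequences indexed by the
initial segments of the well-order mu); its cardinality is |A|^{<mu}
(up to a summand mu, which is irrelevant below since lambda \<ge> mu).\<close>
definition seqs_lt :: "'m rel \<Rightarrow> 'a set \<Rightarrow> ('m \<times> ('m \<Rightarrow> 'a)) set" where
  "seqs_lt mu A = {(\<alpha>, f). \<alpha> \<in> Field mu \<and> f \<in> Order_Relation.underS mu \<alpha> \<rightarrow>\<^sub>E A}"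

definition LST_cardinal ::
  "('s, 'i) vocab \<Rightarrow> 'm rel \<Rightarrow> ('a, 's, 'i) struc set \<Rightarrow>
   (('a, 's, 'i) struc \<Rightarrow> ('a, 's, 'i) struc \<Rightarrow> bool) \<Rightarrow> 'c rel \<Rightarrow> bool" where
  "LST_cardinal V mu K le lam \<longleftrightarrow>
     Card_order lam \<and>
     |seqs_lt mu (Field lam)| =o lam \<and>
     |RS V \<union> FS V| +c mu \<le>o lam \<and>
     (\<forall>M \<in> K. \<forall>A \<subseteq> univ M. \<exists>M0. le M0 M \<and> A \<subseteq> univ M0 \<and>
        |univ M0| \<le>o |seqs_lt mu A| +c lam)"

text \<open>lam is LS(K): the least cardinal satisfying the LST axiom.  (Every cardinal
below lam is represented on the type of lam, so minimality within that type is
global minimality.)\<close>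
definition is_LS :: 
  "('s, 'i) vocab \<Rightarrow> 'm rel \<Rightarrow> ('a, 's, 'i) struc set \<Rightarrow>
   (('a, 's, 'i) struc \<Rightarrow> ('a, 's, 'i) struc \<Rightarrow> bool) \<Rightarrow> 'c rel \<Rightarrow> bool" where
  "is_LS V mu K le lam \<longleftrightarrow> LST_cardinal V mu K le lam \<and>
     (\<forall>lam' :: 'c rel. LST_cardinal V mu K le lam' \<longrightarrow> lam \<le>o lam')"

definition mu_AEC ::
  "('s, 'i) vocab \<Rightarrow> 'm rel \<Rightarrow> ('a, 's, 'i) struc set \<Rightarrow>
   (('a, 's, 'i) struc \<Rightarrow> ('a, 's, 'i) struc \<Rightarrow> bool) \<Rightarrow> 'c rel \<Rightarrow> bool" where
  "mu_AEC V mu K le lam \<longleftrightarrow> regular_infinite mu \<and> mu_ary_abstract_class V mu K le \<and>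
     coherence V K le \<and> chain_axioms V mu K le \<and> is_LS V mu K le lam"

text \<open>A tau(K+)-structure is a pair (M, P) of a tau(K)-structure M and the
interpretation P of the new LS(K)-ary predicate: a set of sequences of length
LS(K) (indexed by Field lam) from the universe of M.\<close>
type_synonym ('a, 's, 'i, 'c) pstruc = "('a, 's, 'i) struc \<times> ('c \<Rightarrow> 'a) set"

definition Kplus ::
  "('s, 'i) vocab \<Rightarrow> ('a, 's, 'i) struc set \<Rightarrow>
   (('a, 's, 'i) struc \<Rightarrow> ('a, 's, 'i) struc \<Rightarrow> bool) \<Rightarrow> 'c rel \<Rightarrow> ('a, 's, 'i, 'c) pstruc set" where
  "Kplus V K le lam = {(M, P). M \<in> K \<and>
     P = {a \<in> Field lam \<rightarrow>\<^sub>E univ M. le (restr V M (a ` Field lam)) M}}"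

definition le_plus ::
  "('s, 'i) vocab \<Rightarrow> ('a, 's, 'i) struc set \<Rightarrow>
   (('a, 's, 'i) struc \<Rightarrow> ('a, 's, 'i) struc \<Rightarrow> bool) \<Rightarrow> 'c rel \<Rightarrow>
   ('a, 's, 'i, 'c) pstruc \<Rightarrow> ('a, 's, 'i, 'c) pstruc \<Rightarrow> bool" where
  "le_plus V K le lam Mp Np \<longleftrightarrow> Mp \<in> Kplus V K le lam \<and> Np \<in> Kplus V K le lam \<and> le (fst Mp) (fst Np)"

definition substr_plus ::
  "('s, 'i) vocab \<Rightarrow> 'c rel \<Rightarrow> ('a, 's, 'i, 'c) pstruc \<Rightarrow> ('a, 's, 'i, 'c) pstruc \<Rightarrow> bool" where
  "substr_plus V lam Mp Np \<longleftrightarrow> substr V (fst Mp) (fst Np) \<and>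
     snd Mp = snd Np \<inter> (Field lam \<rightarrow>\<^sub>E univ (fst Mp))"

end

theory Submission
  imports Defs
begin

text \<open>A model M of K is the \<mu>-directed union of its strong substructures of size at
most LS(K): directedness comes from the LST axiom together with coherence, and by the
chain axioms M is then a strong substructure of every common strong extension of them.
Each such substructure, listed as a sequence of length LS(K), lies in the predicate P of
M+; since P is preserved in the \<tau>(K+)-extension N+, each of them is strong in N, and
hence so is M.\<close>

lemma tuples_mono: "A \<subseteq> B \<Longrightarrow> tuples V s A \<subseteq> tuples V s B"
  unfolding tuples_def by auto

lemma restr_univ_substr:
  assumes "substr V M N"
  shows "restr V N (univ M) = M"
proof -
  have wf: "wf_struc V M"
    and rel: "\<And>s. rel M s = rel N s \<inter> tuples V s (univ M)"
    and fn: "\<And>s x. s \<in> FS V \<Longrightarrow> x \<in> tuples V s (univ M) \<Longrightarrow> fn M s x = fn N s x"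
    using assms unfolding substr_def by auto
  have "fn M = (\<lambda>s x. if s \<in> FS V \<and> x \<in> tuples V s (univ M) then fn N s x else undefined)"
    using wf fn unfolding wf_struc_def by (intro ext) auto
  with rel show ?thesis
    unfolding restr_def by (cases M) auto
qed

lemma substr_trans:
  assumes "substr V L M" and "substr V M N"
  shows "substr V L N"
proof -
  have LM: "univ L \<subseteq> univ M"
    using assms(1) unfolding substr_def by blast
  then have "tuples V s (univ L) \<subseteq> tuples V s (univ M)" for s
    by (rule tuples_mono)
  with assms LM show ?thesis
    unfolding substr_def by (auto simp: subset_iff)
qed

lemma substr_of_common_superstr:
  assumes "substr V L N" and "substr V M N" and "univ L \<subseteq> univ M"
  shows "substr V L M"
proof -
  have "tuples V s (univ L) \<subseteq> tuples V s (univ M)" for s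
    using assms(3) by (rule tuples_mono)
  with assms show ?thesis
    unfolding substr_def by (auto simp: subset_iff)
qed

lemma seqs_lt_mono_card:
  assumes "|A| \<le>o |B|"
  shows "|seqs_lt mu A| \<le>o |seqs_lt mu B|"
proof -
  obtain g where g: "inj_on g A" "g ` A \<subseteq> B"
    using card_of_ordLeq[THEN iffD2, OF assms] by blast
  define h where "h = (\<lambda>(\<alpha>, f). (\<alpha>, restrict (g \<circ> f) (Order_Relation.underS mu \<alpha>)))"
  have "inj_on h (seqs_lt mu A)"
  proof (rule inj_onI)
    fix x y assume "x \<in> seqs_lt mu A" "y \<in> seqs_lt mu A" and eq: "h x = h y"
    then obtain \<alpha> f f' where x: "x = (\<alpha>, f)" and y: "y = (\<alpha>, f')"
      and f: "f \<in> Order_Relation.underS mu \<alpha> \<rightarrow>\<^sub>E A" and f': "f' \<in> Order_Relation.underS mu \<alpha> \<rightarrow>\<^sub>E A"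
      unfolding seqs_lt_def h_def by auto
    have "f = f'"
    proof (rule PiE_ext[OF f f'])
      fix z assume z: "z \<in> Order_Relation.underS mu \<alpha>"
      then have "g (f z) = g (f' z)"
        using eq unfolding x y h_def by (auto dest: fun_cong[of _ _ z])
      with z f f' show "f z = f' z"
        using inj_onD[OF g(1)] by blast
    qed
    then show "x = y"
      using x y by simp
  qed
  moreover have "h ` seqs_lt mu A \<subseteq> seqs_lt mu B"
  proof
    fix y assume "y \<in> h ` seqs_lt mu A"
    then obtain \<alpha> f where y: "y = h (\<alpha>, f)" and \<alpha>: "\<alpha> \<in> Field mu"
      and f: "f \<in> Order_Relation.underS mu \<alpha> \<rightarrow>\<^sub>E A"
      unfolding seqs_lt_def by blast
    have "restrict (g \<circ> f) (Order_Relation.underS mu \<alpha>) \<in> Order_Relation.underS mu \<alpha> \<rightarrow>\<^sub>E B"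
      using f g(2) by fastforce
    with \<alpha> show "y \<in> seqs_lt mu B"
      unfolding y h_def seqs_lt_def by simp
  qed
  ultimately show ?thesis
    using card_of_ordLeq[THEN iffD1] by blast
qed

lemma exists_enumeration:
  assumes "A \<noteq> {}" and "|A| \<le>o |B|"
  shows "\<exists>a \<in> B \<rightarrow>\<^sub>E A. a ` B = A"
proof -
  obtain g where "g ` B = A"
    using card_of_ordLeq2[OF assms(1), THEN iffD2, OF assms(2)] ..
  then have "restrict g B \<in> B \<rightarrow>\<^sub>E A" and "restrict g B ` B = A"
    by auto
  then show ?thesis
    by blast
qed

locale mu_AEC_setting =
  fixes V :: "('s, 'i) vocab" and mu :: "'m rel" and K :: "('a, 's, 'i) struc set"
    and le :: "('a, 's, 'i) struc \<Rightarrow> ('a, 's, 'i) struc \<Rightarrow> bool" and lam :: "'c rel"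
  assumes mu_AEC: "mu_AEC V mu K le lam"
begin

lemma le_imp_in_K: "le M N \<Longrightarrow> M \<in> K \<and> N \<in> K"
  and le_refl: "M \<in> K \<Longrightarrow> le M M"
  and le_trans: "le L M \<Longrightarrow> le M N \<Longrightarrow> le L N"
  and le_antisym: "le M N \<Longrightarrow> le N M \<Longrightarrow> M = N"
  and le_imp_substr: "le M N \<Longrightarrow> substr V M N"
  and wf_struc_K: "M \<in> K \<Longrightarrow> wf_struc V M"
  using mu_AEC unfolding mu_AEC_def mu_ary_abstract_class_def by metis+

lemma le_coherence: "L \<in> K \<Longrightarrow> substr V L M \<Longrightarrow> le M N \<Longrightarrow> le L N \<Longrightarrow> le L M"
  using mu_AEC le_imp_in_K unfolding mu_AEC_def coherence_def by blast

lemma LST_cardinal_LS: "LST_cardinal V mu K le lam"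
  using mu_AEC unfolding mu_AEC_def is_LS_def by blast

lemma Card_order_mu: "Card_order mu"
  using mu_AEC unfolding mu_AEC_def regular_infinite_def by blast

lemma Card_order_LS: "Card_order lam"
  using LST_cardinal_LS unfolding LST_cardinal_def by blast

lemma mu_le_LS: "|Field mu| \<le>o |Field lam|"
proof -
  have "|Field mu| =o mu"
    using Card_order_mu by (rule card_of_Field_ordIso)
  also have "mu \<le>o |RS V \<union> FS V| +c mu"
    using Card_order_mu by (rule ordLeq_csum2)
  also have "|RS V \<union> FS V| +c mu \<le>o lam"
    using LST_cardinal_LS unfolding LST_cardinal_def by blast
  also have "lam \<le>o |Field lam|"
    using Card_order_LS by (rule Card_order_iff_ordLeq_card_of[THEN iffD1])
  finally show ?thesis .
qed

lemma infinite_LS: "infinite (Field lam)"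
  using mu_AEC mu_le_LS card_of_ordLeq_infinite unfolding mu_AEC_def regular_infinite_def by blast

text \<open>The LST axiom for sets of size at most LS(K): as LS(K)^{<\<mu>} = LS(K), the bound
|A|^{<\<mu>} + LS(K) collapses to LS(K).\<close>
lemma LST_small:
  assumes "M \<in> K" and "A \<subseteq> univ M" and "|A| \<le>o |Field lam|"
  shows "\<exists>M0. le M0 M \<and> A \<subseteq> univ M0 \<and> |univ M0| \<le>o |Field lam|"
proof -
  obtain M0 where M0: "le M0 M" "A \<subseteq> univ M0" and size: "|univ M0| \<le>o |seqs_lt mu A| +c lam"
    using LST_cardinal_LS assms(1,2) unfolding LST_cardinal_def by blast
  have "|seqs_lt mu A| \<le>o |seqs_lt mu (Field lam)|"
    using assms(3) by (rule seqs_lt_mono_card)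
  also have "|seqs_lt mu (Field lam)| =o lam"
    using LST_cardinal_LS unfolding LST_cardinal_def by blast
  finally have "|seqs_lt mu A| +c lam =o lam"
    using csum_absorb2'[OF Card_order_LS] infinite_LS unfolding cinfinite_def by blast
  then have "|univ M0| \<le>o lam"
    using size ordLeq_ordIso_trans by blast
  also have "lam \<le>o |Field lam|"
    using Card_order_LS by (rule Card_order_iff_ordLeq_card_of[THEN iffD1])
  finally show ?thesis
    using M0 by blast
qed

definition small_substrs :: "('a, 's, 'i) struc \<Rightarrow> ('a, 's, 'i) struc set" where
  "small_substrs M = {M0. le M0 M \<and> |univ M0| \<le>o |Field lam|}"

lemma small_substrs_in_K: "M0 \<in> small_substrs M \<Longrightarrow> M0 \<in> K"
  unfolding small_substrs_def using le_imp_in_K by blast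

lemma small_substrs_upper_bound:
  assumes "M \<in> K" and X: "X \<subseteq> small_substrs M" "|X| <o mu"
  shows "\<exists>M1 \<in> small_substrs M. \<forall>M0 \<in> X. le M0 M1"
proof -
  have "|X| \<le>o mu"
    using X(2) by (rule ordLess_imp_ordLeq)
  also have "mu =o |Field mu|"
    using card_of_Field_ordIso[OF Card_order_mu] by (rule ordIso_symmetric)
  also have "|Field mu| \<le>o |Field lam|"
    by (rule mu_le_LS)
  finally have "|X| \<le>o |Field lam|" .
  then have "|\<Union>M0 \<in> X. univ M0| \<le>o |Field lam|"
    using card_of_UNION_ordLeq_infinite[OF infinite_LS] X(1) unfolding small_substrs_def by blast
  moreover have "(\<Union>M0 \<in> X. univ M0) \<subseteq> univ M"
    using X(1) le_imp_substr unfolding small_substrs_def substr_def by blast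
  ultimately obtain M1 where M1: "le M1 M" "(\<Union>M0 \<in> X. univ M0) \<subseteq> univ M1" "|univ M1| \<le>o |Field lam|"
    using LST_small[OF assms(1)] by blast
  have "le M0 M1" if "M0 \<in> X" for M0
  proof -
    have M0: "le M0 M" "M0 \<in> K"
      using that X(1) small_substrs_in_K unfolding small_substrs_def by blast+
    have "substr V M0 M1"
      using substr_of_common_superstr le_imp_substr M0(1) M1(1,2) that by blast
    with M0 M1(1) show ?thesis
      using le_coherence by blast
  qed
  with M1 show ?thesis
    unfolding small_substrs_def by blast
qed

lemma mu_directed_small_substrs:
  assumes "M \<in> K"
  shows "mu_directed mu (small_substrs M) le"
  unfolding mu_directed_def
  using le_refl small_substrs_in_K le_trans le_antisym small_substrs_upper_bound[OF assms]
  by blast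

lemma union_small_substrs:
  assumes "M \<in> K"
  shows "is_union V (small_substrs M) id M"
proof -
  have "univ M \<subseteq> (\<Union>M0 \<in> small_substrs M. univ M0)"
  proof
    fix x assume "x \<in> univ M"
    moreover have "|{x}| \<le>o |Field lam|"
      using infinite_LS card_of_singl_ordLeq by (metis finite.emptyI)
    ultimately show "x \<in> (\<Union>M0 \<in> small_substrs M. univ M0)"
      using LST_small[OF assms, of "{x}"] unfolding small_substrs_def by blast
  qed
  moreover have substr: "substr V M0 M" if "M0 \<in> small_substrs M" for M0
    using that le_imp_substr unfolding small_substrs_def by blast
  then have "(\<Union>M0 \<in> small_substrs M. univ M0) \<subseteq> univ M"
    unfolding substr_def by blast
  ultimately show ?thesis
    using wf_struc_K[OF assms] substr unfolding is_union_def by auto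
qed

lemma le_if_small_substrs_le:
  assumes "M \<in> K" and "\<And>M0. M0 \<in> small_substrs M \<Longrightarrow> le M0 N"
  shows "le M N"
proof -
  have "directed_system mu K le (small_substrs M) le id"
    unfolding directed_system_def
    using mu_directed_small_substrs[OF assms(1)] small_substrs_in_K by simp
  with mu_AEC union_small_substrs[OF assms(1)] assms(2) show ?thesis
    unfolding mu_AEC_def chain_axioms_def by simp
qed

lemma Kplus_predicate_enumerates_small_substr:
  assumes "(M, P) \<in> Kplus V K le lam" and "M0 \<in> small_substrs M"
  shows "\<exists>a \<in> P. a ` Field lam = univ M0"
proof -
  have M0: "le M0 M" "|univ M0| \<le>o |Field lam|"
    using assms(2) unfolding small_substrs_def by blast+
  have "univ M0 \<noteq> {}"
    using wf_struc_K[OF small_substrs_in_K[OF assms(2)]] unfolding wf_struc_def by blast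
  then obtain a where a: "a \<in> Field lam \<rightarrow>\<^sub>E univ M0" "a ` Field lam = univ M0"
    using exists_enumeration[OF _ M0(2)] by blast
  have "univ M0 \<subseteq> univ M"
    using le_imp_substr[OF M0(1)] unfolding substr_def by blast
  with a(1) have "a \<in> Field lam \<rightarrow>\<^sub>E univ M"
    by auto
  moreover have "le (restr V M (a ` Field lam)) M"
    using M0(1) restr_univ_substr[OF le_imp_substr[OF M0(1)]] a(2) by simp
  ultimately show ?thesis
    using assms(1) a(2) unfolding Kplus_def by blast
qed

end

theorem theorem4p6:
  fixes V :: "('s, 'i) vocab" and mu :: "'m rel" and K :: "('a, 's, 'i) struc set"
    and le :: "('a, 's, 'i) struc \<Rightarrow> ('a, 's, 'i) struc \<Rightarrow> bool" and lam :: "'c rel"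
    and Mp Np :: "('a, 's, 'i, 'c) pstruc"
  assumes "mu_AEC V mu K le lam"
    and "Mp \<in> Kplus V K le lam" and "Np \<in> Kplus V K le lam"
    and "substr_plus V lam Mp Np"
  shows "le_plus V K le lam Mp Np"
proof -
  interpret mu_AEC_setting V mu K le lam
    using assms(1) by unfold_locales
  obtain M P N Q where Mp: "Mp = (M, P)" and Np: "Np = (N, Q)"
    by (cases Mp, cases Np)
  have M: "(M, P) \<in> Kplus V K le lam" and N: "(N, Q) \<in> Kplus V K le lam"
    using assms(2,3) unfolding Mp Np by simp_all
  have MN: "substr V M N" and PQ: "P \<subseteq> Q"
    using assms(4) unfolding Mp Np substr_plus_def by auto
  have "le M0 N" if M0: "M0 \<in> small_substrs M" for M0
  proof -
    obtain a where "a \<in> P" and a: "a ` Field lam = univ M0"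
      using Kplus_predicate_enumerates_small_substr[OF M M0] by blast
    with PQ N have "le (restr V N (univ M0)) N"
      unfolding Kplus_def by auto
    moreover have "substr V M0 N"
      using M0 le_imp_substr substr_trans MN unfolding small_substrs_def by blast
    ultimately show ?thesis
      by (simp add: restr_univ_substr)
  qed
  then have "le M N"
    using M le_if_small_substrs_le unfolding Kplus_def by blast
  then show ?thesis
    using assms(2,3) unfolding Mp Np le_plus_def by simp
qed

end
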